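(* Let $(\mathcal{E},\Sigma,\partial,\mathcal{M})$ be a decoding problem with fault distance $d$, let $\mathcal{E}=C_1\sqcup\dots\sqcup C_n$ be a partition into commit regions processed in the order $1,\dots,n$, and for each $i$ let $B_i\subseteq \mathcal{E}\setminus(P_i\cup C_i)$ be a buffer region, where $P_i$, $F_i$, $\Sigma_{V_i}$ and $\partial_{V_i}$ are as defined in the context. Run the modular decoding procedure described in the context. Assume that for every $i$: 1. (Local decoder soundness) whenever the input syndrome $s=\partial_{V_i}(\kappa_{P_i}+\epsilon)$ satisfies $s=\partial_{V_i}\eta$ for some $\eta\subseteq C_i\cup B_i$ with $|\eta|<d/2$, the local decoder for task $i$ returns some $\mu_i\subseteq C_i\cup B_i$ with $\partial_{V_i}\mu_i=s$ and $|\mu_i|\le|\mu'|$ for every $\mu'\subseteq C_i\cup B_i$ with $\partial_{V_i}\mu'=s$; 2. (Buffering condition) every connected error $\eta\in\mathbb{Z}_2^{\mathcal{E}}$ such that $\eta\subseteq C_i\cup B_i$, $\partial_{V_i}\eta=0$, $\eta\cap C_i\neq\emptyset$ and $\partial\eta\neq 0$ has weight $|\eta|\ge d$. Then for every physical error $\epsilon\in\mathbb{Z}_2^{\mathcal{E}}$ with $|\epsilon|<d/2$: no task aborts, and the global correction $\kappa=\sum_{i=1}^n\kappa_i$ satisfies $\partial\kappa=\partial\epsilon$ and $|\kappa|\le|\epsilon|$. Consequently $\kappa$ is a minimum-weight correction for the syndrome $\partial\epsilon$ (i.e. $|\kappa|\le|\kappa'|$ for all $\kappa'$ with $\partial\kappa'=\partial\epsilon$),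 and $\kappa_{\mathcal{M}}=\epsilon_{\mathcal{M}}$.
   Context: Setting. $\mathcal{E}$ is a finite set of elementary error generators and $\Sigma$ a finite set of check generators. Errors are elements of $\mathbb{Z}_2^{\mathcal{E}}$, identified with subsets of $\mathcal{E}$ via indicator vectors; addition is symmetric difference, and for $\eta\in\mathbb{Z}_2^{\mathcal E}$ and $A\subseteq\mathcal{E}$, $\eta_A:=\eta\cap A$. The weight $|\eta|$ is the cardinality of $\eta$. There is a linear syndrome map $\partial:\mathbb{Z}_2^{\mathcal{E}}\to\mathbb{Z}_2^{\Sigma}$; $\eta$ is undetectable if $\partial\eta=0$. $\mathcal{M}$ is a set of logical outcomes, and each error $\eta$ has a linear logical effect $\eta_{\mathcal{M}}\in\mathbb{Z}_2^{\mathcal{M}}$ (linear in $\eta$). The fault distance $d$ is the minimum weight of an error $\eta$ with $\partial\eta=0$ and $\eta_{\mathcal{M}}\neq0$. Connectedness. Two generators $e_1,e_2\in\mathcal{E}$ are directly connected if there is $\sigma\in\Sigma$ with $\partial e_1(\sigma)=\partial e_2(\sigma)=1$. An error $\eta$ (as a set) is connected if it is connected under this adjacency relation; its connected components are the maximal connected subsets. Modular decoding. Commit regions $C_1,\dots,C_n$ partition $\mathcal{E}$ and are processed in the order $1,\dots,n$. For task $i$: the past is $P_i:=C_1\cup\dots\cup C_{i-1}$; the buffer is $B_i\subseteq\mathcal{E}\setminus(P_i\cup C_i)$; the future is $F_i:=\mathcal{E}\setminus(P_i\cup C_i\cup B_i)$. The visible checks are $\Sigma_{V_i}:=\{\sigma\in\Sigma:\partial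 f(\sigma)=0\ \text{for all } f\in F_i\}$, and $\partial_{V_i}\eta$ denotes the restriction of $\partial\eta$ to $\Sigma_{V_i}$. Let $\kappa_{P_i}:=\kappa_1+\dots+\kappa_{i-1}$ (with $\kappa_{P_1}=0$). Task $i$ is given the syndrome $s_i=\partial_{V_i}(\kappa_{P_i}+\epsilon)$ and a local decoder returns a correction estimate $\mu_i\subseteq C_i\cup B_i$ with $\partial_{V_i}\mu_i=s_i$ (the task aborts if no such $\mu_i$ exists); the committed correction is $\kappa_i:=\mu_i\cap C_i$. The global correction is $\kappa:=\kappa_1+\dots+\kappa_n$. *)

theory Defs
  imports Main "HOL-Library.Extended_Nat"
begin

text \<open>Errors are subsets of the generator set E (indicator vectors over Z_2);
  addition is symmetric difference.\<close>
definition sdiff :: "'a set \<Rightarrow> 'a set \<Rightarrow> 'a set" (infixl "\<oplus>" 65) where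
  "A \<oplus> B = (A - B) \<union> (B - A)"

text \<open>Syndrome map: D e \<sigma> means that the syndrome of the elementary generator e
  has value 1 at check \<sigma>. The syndrome of an error is the Z_2-linear extension,
  represented as the set of checks with value 1.\<close>
definition syn :: "'s set \<Rightarrow> ('e \<Rightarrow> 's \<Rightarrow> bool) \<Rightarrow> 'e set \<Rightarrow> 's set" where
  "syn Sig D \<eta> = {\<sigma> \<in> Sig. odd (card {e \<in> \<eta>. D e \<sigma>})}"

text \<open>Logical effect: L e m means generator e flips logical outcome m; extended linearly.\<close>
definition logical :: "'m set \<Rightarrow> ('e \<Rightarrow> 'm \<Rightarrow> bool) \<Rightarrow> 'e set \<Rightarrow> 'm set" where
  "logical M L \<eta> = {m \<in> M. odd (card {e \<in> \<eta>. L e m})}"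

text \<open>Fault distance (infinity if there is no undetectable logical error).\<close>
definition fault_distance ::
  "'e set \<Rightarrow> 's set \<Rightarrow> ('e \<Rightarrow> 's \<Rightarrow> bool) \<Rightarrow> 'm set \<Rightarrow> ('e \<Rightarrow> 'm \<Rightarrow> bool) \<Rightarrow> enat" where
  "fault_distance E Sig D M L =
     Inf {enat (card \<eta>) | \<eta>. \<eta> \<subseteq> E \<and> syn Sig D \<eta> = {} \<and> logical M L \<eta> \<noteq> {}}"

definition directly_connected :: "'s set \<Rightarrow> ('e \<Rightarrow> 's \<Rightarrow> bool) \<Rightarrow> 'e \<Rightarrow> 'e \<Rightarrow> bool" where
  "directly_connected Sig D e1 e2 = (\<exists>\<sigma>\<in>Sig. D e1 \<sigma> \<and> D e2 \<sigma>)"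

definition connected_error :: "'s set \<Rightarrow> ('e \<Rightarrow> 's \<Rightarrow> bool) \<Rightarrow> 'e set \<Rightarrow> bool" where
  "connected_error Sig D \<eta> =
     (\<forall>x\<in>\<eta>. \<forall>y\<in>\<eta>.
        (x, y) \<in> {(a, b). a \<in> \<eta> \<and> b \<in> \<eta> \<and> directly_connected Sig D a b}\<^sup>*)"

definition past :: "(nat \<Rightarrow> 'e set) \<Rightarrow> nat \<Rightarrow> 'e set" where
  "past C i = (\<Union>j\<in>{1..<i}. C j)"

definition future :: "'e set \<Rightarrow> (nat \<Rightarrow> 'e set) \<Rightarrow> (nat \<Rightarrow> 'e set) \<Rightarrow> nat \<Rightarrow> 'e set" where
  "future E C B i = E - (past C i \<union> C i \<union> B i)"

definition visible ::
  "'e set \<Rightarrow> 's set \<Rightarrow> ('e \<Rightarrow> 's \<Rightarrow> bool) \<Rightarrow> (nat \<Rightarrow> 'e set) \<Rightarrow> (nat \<Rightarrow> 'e set) \<Rightarrow> nat \<Rightarrow> 's set" where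
  "visible E Sig D C B i = {\<sigma> \<in> Sig. \<forall>f \<in> future E C B i. \<not> D f \<sigma>}"

definition synV ::
  "'e set \<Rightarrow> 's set \<Rightarrow> ('e \<Rightarrow> 's \<Rightarrow> bool) \<Rightarrow> (nat \<Rightarrow> 'e set) \<Rightarrow> (nat \<Rightarrow> 'e set) \<Rightarrow> nat \<Rightarrow> 'e set \<Rightarrow> 's set" where
  "synV E Sig D C B i \<eta> = syn Sig D \<eta> \<inter> visible E Sig D C B i"

text \<open>Modular decoding run. dec i s is the local decoder of task i applied to syndrome s;
  None means the task aborts. run ... k is kappa_{P_{k+1}} = kappa_1 + ... + kappa_k,
  or None if some task among 1..k aborted.\<close>
primrec run ::
  "'e set \<Rightarrow> 's set \<Rightarrow> ('e \<Rightarrow> 's \<Rightarrow> bool) \<Rightarrow> (nat \<Rightarrow> 'e set) \<Rightarrow> (nat \<Rightarrow> 'e set) \<Rightarrow>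
   (nat \<Rightarrow> 's set \<Rightarrow> 'e set option) \<Rightarrow> 'e set \<Rightarrow> nat \<Rightarrow> 'e set option" where
  "run E Sig D C B dec \<epsilon> 0 = Some {}"
| "run E Sig D C B dec \<epsilon> (Suc k) =
     (case run E Sig D C B dec \<epsilon> k of
        None \<Rightarrow> None
      | Some K \<Rightarrow>
          (case dec (Suc k) (synV E Sig D C B (Suc k) (K \<oplus> \<epsilon>)) of
             None \<Rightarrow> None
           | Some \<mu> \<Rightarrow> Some (K \<oplus> (\<mu> \<inter> C (Suc k)))))"

end

theory Submission
  imports Defs
begin

text \<open>Before task \<open>i\<close> the committed correction \<open>K\<close> and a residual error \<open>\<epsilon>'\<close> supported
  outside the past satisfy \<open>\<partial>(K + \<epsilon>) = \<partial>\<epsilon>'\<close> and \<open>|K| + |\<epsilon>'| \<le> |\<epsilon>|\<close>. Future generators are invisible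
  to task \<open>i\<close>, so it effectively decodes the part \<open>\<eta>\<close> of \<open>\<epsilon>'\<close> in \<open>C\<^sub>i \<union> B\<^sub>i\<close>, of weight below \<open>d/2\<close>.
  The minimal answer \<open>\<mu>\<close> differs from \<open>\<eta>\<close> by an error \<open>\<delta>\<close> of weight below \<open>d\<close> that is silent on
  the visible checks; by the buffering condition every connected component of \<open>\<delta>\<close> meeting \<open>C\<^sub>i\<close>
  is undetectable. Adding these components to \<open>\<eta>\<close> does not increase its weight (by minimality of
  \<open>\<mu>\<close>) and makes it agree with \<open>\<mu>\<close> on \<open>C\<^sub>i\<close>, so after committing \<open>\<mu> \<inter> C\<^sub>i\<close> the invariant holds
  again with a residual in the buffer. After the last task the residual is empty. Since the run
  depends only on the syndrome of \<open>\<epsilon>\<close>, \<open>\<kappa>\<close> has minimum weight, and \<open>\<kappa> + \<epsilon>\<close> is an undetectable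
  error of weight below \<open>d\<close>, hence logically trivial.\<close>

subsection \<open>Symmetric difference\<close>

lemma mem_sdiff: "x \<in> A \<oplus> B \<longleftrightarrow> (x \<in> A) \<noteq> (x \<in> B)"
  by (auto simp: sdiff_def)

lemma sdiff_assoc: "A \<oplus> B \<oplus> C = A \<oplus> (B \<oplus> C)"
  by (auto simp: sdiff_def)

lemma sdiff_commute: "A \<oplus> B = B \<oplus> A"
  by (auto simp: sdiff_def)

lemma sdiff_left_commute: "A \<oplus> (B \<oplus> C) = B \<oplus> (A \<oplus> C)"
  by (auto simp: sdiff_def)

lemmas sdiff_ac = sdiff_assoc sdiff_commute sdiff_left_commute

lemma sdiff_empty [simp]: "A \<oplus> {} = A" "{} \<oplus> A = A"
  by (auto simp: sdiff_def)

lemma sdiff_eq_empty_iff: "A \<oplus> B = {} \<longleftrightarrow> A = B"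
  by (auto simp: sdiff_def)

lemma sdiff_subset: "A \<subseteq> X \<Longrightarrow> B \<subseteq> X \<Longrightarrow> A \<oplus> B \<subseteq> X"
  by (auto simp: sdiff_def)

lemma finite_sdiff: "finite A \<Longrightarrow> finite B \<Longrightarrow> finite (A \<oplus> B)"
  by (simp add: sdiff_def)

lemma sdiff_Int_distrib: "(A \<oplus> B) \<inter> V = (A \<inter> V) \<oplus> (B \<inter> V)"
  by (auto simp: sdiff_def)

lemma sdiff_disjoint_eq_Un: "A \<inter> B = {} \<Longrightarrow> A \<oplus> B = A \<union> B"
  by (auto simp: sdiff_def)

lemma Collect_sdiff: "{e \<in> A \<oplus> B. P e} = {e \<in> A. P e} \<oplus> {e \<in> B. P e}"
  by (auto simp: sdiff_def)

lemma card_sdiff_eq: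
  assumes "finite A" "finite B"
  shows "card (A \<oplus> B) + 2 * card (A \<inter> B) = card A + card B"
proof -
  have "card (A \<oplus> B) = card (A - B) + card (B - A)"
    unfolding sdiff_def by (rule card_Un_disjoint) (use assms in auto)
  moreover have "card A = card (A - B) + card (A \<inter> B)"
    using card_Int_Diff[OF assms(1), of B] by simp
  moreover have "card B = card (B - A) + card (A \<inter> B)"
    using card_Int_Diff[OF assms(2), of A] by (simp add: Int_commute)
  ultimately show ?thesis by simp
qed

lemma card_sdiff_le: "finite A \<Longrightarrow> finite B \<Longrightarrow> card (A \<oplus> B) \<le> card A + card B"
  using card_sdiff_eq[of A B] by linarith

lemma odd_card_sdiff:
  assumes "finite A" "finite B"
  shows "odd (card (A \<oplus> B)) \<longleftrightarrow> odd (card A) \<noteq> odd (card B)"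
  using card_sdiff_eq[OF assms] by presburger

text \<open>No finiteness of \<open>K\<close> is needed: if \<open>K\<close> is infinite, so are both sides, whose cardinality is
  then \<open>0\<close>.\<close>
lemma odd_card_sdiff_cong:
  assumes "finite A" "finite B" "odd (card A) = odd (card B)"
  shows "odd (card (K \<oplus> A)) = odd (card (K \<oplus> B))"
proof (cases "finite K")
  case True
  then show ?thesis using assms by (simp add: odd_card_sdiff)
next
  case False
  have "K \<subseteq> (K \<oplus> A) \<union> A" "K \<subseteq> (K \<oplus> B) \<union> B"
    by (auto simp: sdiff_def)
  then have "infinite (K \<oplus> A)" "infinite (K \<oplus> B)"
    using False assms(1,2) finite_subset by blast+
  then show ?thesis by simp
qed

lemma card_sdiff_swap:
  assumes "finite A" "finite B" "X \<subseteq> A \<oplus> B"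
  shows "card (A \<oplus> X) + card (B \<oplus> X) = card A + card B"
proof -
  have "X = (A \<inter> X) \<union> (B \<inter> X)" "(A \<inter> X) \<inter> (B \<inter> X) = {}"
    using assms(3) by (auto simp: sdiff_def)
  moreover have "finite X"
    using assms by (meson finite_Un finite_subset sdiff_subset Un_upper1 Un_upper2)
  ultimately have "card (A \<inter> X) + card (B \<inter> X) = card X"
    by (metis card_Un_disjoint finite_Int)
  then show ?thesis
    using card_sdiff_eq[OF assms(1) \<open>finite X\<close>] card_sdiff_eq[OF assms(2) \<open>finite X\<close>] by linarith
qed

subsection \<open>Linearity of syndromes and logical effects\<close>

lemma syn_empty [simp]: "syn Sig D {} = {}"
  by (simp add: syn_def)

lemma mem_syn_flipped:
  assumes "\<sigma> \<in> syn Sig D \<eta>"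
  shows "\<sigma> \<in> Sig" "\<exists>e\<in>\<eta>. D e \<sigma>"
proof -
  from assms show "\<sigma> \<in> Sig" by (simp add: syn_def)
  from assms have "odd (card {e \<in> \<eta>. D e \<sigma>})" by (simp add: syn_def)
  then show "\<exists>e\<in>\<eta>. D e \<sigma>"
    by (metis (mono_tags, lifting) Collect_empty_eq card.empty even_zero)
qed

lemma syn_sdiff:
  assumes "finite A" "finite B"
  shows "syn Sig D (A \<oplus> B) = syn Sig D A \<oplus> syn Sig D B"
proof (rule set_eqI)
  fix \<sigma>
  have "odd (card {e \<in> A \<oplus> B. D e \<sigma>}) \<longleftrightarrow> odd (card {e \<in> A. D e \<sigma>}) \<noteq> odd (card {e \<in> B. D e \<sigma>})"
    unfolding Collect_sdiff using assms by (simp add: odd_card_sdiff)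
  then show "\<sigma> \<in> syn Sig D (A \<oplus> B) \<longleftrightarrow> \<sigma> \<in> syn Sig D A \<oplus> syn Sig D B"
    unfolding syn_def mem_Collect_eq mem_sdiff[of \<sigma>] by blast
qed

lemma logical_sdiff:
  assumes "finite A" "finite B"
  shows "logical M L (A \<oplus> B) = logical M L A \<oplus> logical M L B"
proof (rule set_eqI)
  fix m
  have "odd (card {e \<in> A \<oplus> B. L e m}) \<longleftrightarrow> odd (card {e \<in> A. L e m}) \<noteq> odd (card {e \<in> B. L e m})"
    unfolding Collect_sdiff using assms by (simp add: odd_card_sdiff)
  then show "m \<in> logical M L (A \<oplus> B) \<longleftrightarrow> m \<in> logical M L A \<oplus> logical M L B"
    unfolding logical_def mem_Collect_eq mem_sdiff[of m] by blast
qed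

lemma syn_sdiff_cong:
  assumes "finite A" "finite B" "syn Sig D A = syn Sig D B"
  shows "syn Sig D (K \<oplus> A) = syn Sig D (K \<oplus> B)"
proof (rule set_eqI)
  fix \<sigma>
  have "\<sigma> \<in> Sig \<Longrightarrow> odd (card {e \<in> A. D e \<sigma>}) = odd (card {e \<in> B. D e \<sigma>})"
    using assms(3) unfolding syn_def by blast
  then have "\<sigma> \<in> Sig \<Longrightarrow> odd (card {e \<in> K \<oplus> A. D e \<sigma>}) = odd (card {e \<in> K \<oplus> B. D e \<sigma>})"
    unfolding Collect_sdiff
    using odd_card_sdiff_cong[of "{e \<in> A. D e \<sigma>}" "{e \<in> B. D e \<sigma>}" "{e \<in> K. D e \<sigma>}"] assms(1,2)
    by simp
  then show "\<sigma> \<in> syn Sig D (K \<oplus> A) \<longleftrightarrow> \<sigma> \<in> syn Sig D (K \<oplus> B)"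
    unfolding syn_def mem_Collect_eq by blast
qed

lemma synV_sdiff:
  "finite X \<Longrightarrow> finite Y \<Longrightarrow>
     synV E Sig D C B i (X \<oplus> Y) = synV E Sig D C B i X \<oplus> synV E Sig D C B i Y"
  by (simp add: synV_def syn_sdiff sdiff_Int_distrib)

lemma synV_future: "\<phi> \<subseteq> future E C B i \<Longrightarrow> synV E Sig D C B i \<phi> = {}"
  unfolding synV_def visible_def by (blast dest: mem_syn_flipped(2))

lemma run_syn_cong:
  assumes "finite \<epsilon>\<^sub>1" "finite \<epsilon>\<^sub>2" "syn Sig D \<epsilon>\<^sub>1 = syn Sig D \<epsilon>\<^sub>2"
  shows "run E Sig D C B dec \<epsilon>\<^sub>1 k = run E Sig D C B dec \<epsilon>\<^sub>2 k"
  by (induction k) (auto simp: synV_def syn_sdiff_cong[OF assms] split: option.split)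

lemma logical_eq_below_fault_distance:
  assumes "finite E" "\<kappa> \<subseteq> E" "\<epsilon> \<subseteq> E" "syn Sig D \<kappa> = syn Sig D \<epsilon>"
    and "enat (card \<kappa> + card \<epsilon>) < fault_distance E Sig D M L"
  shows "logical M L \<kappa> = logical M L \<epsilon>"
proof -
  have fin: "finite \<kappa>" "finite \<epsilon>" using assms(1-3) finite_subset by blast+
  have "logical M L (\<kappa> \<oplus> \<epsilon>) = {}"
  proof (rule ccontr)
    assume "logical M L (\<kappa> \<oplus> \<epsilon>) \<noteq> {}"
    moreover have "\<kappa> \<oplus> \<epsilon> \<subseteq> E" "syn Sig D (\<kappa> \<oplus> \<epsilon>) = {}"
      using assms(2-4) by (simp_all add: sdiff_subset syn_sdiff[OF fin] sdiff_eq_empty_iff)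
    ultimately have "fault_distance E Sig D M L \<le> enat (card (\<kappa> \<oplus> \<epsilon>))"
      unfolding fault_distance_def by (blast intro: Inf_lower)
    also have "\<dots> \<le> enat (card \<kappa> + card \<epsilon>)"
      using card_sdiff_le[OF fin] by simp
    finally show False using assms(5) by simp
  qed
  then show ?thesis by (simp add: logical_sdiff[OF fin] sdiff_eq_empty_iff)
qed

lemma past_Suc: "0 < i \<Longrightarrow> past C (Suc i) = past C i \<union> C i"
proof -
  assume "0 < i"
  then have "{1..<Suc i} = insert i {1..<i}" by auto
  then show ?thesis unfolding past_def by auto
qed

subsection \<open>Connected components of an error\<close>

definition error_adjacency :: "'s set \<Rightarrow> ('e \<Rightarrow> 's \<Rightarrow> bool) \<Rightarrow> 'e set \<Rightarrow> ('e \<times> 'e) set" where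
  "error_adjacency Sig D \<eta> = {(a, b). a \<in> \<eta> \<and> b \<in> \<eta> \<and> directly_connected Sig D a b}"

definition error_component :: "'s set \<Rightarrow> ('e \<Rightarrow> 's \<Rightarrow> bool) \<Rightarrow> 'e set \<Rightarrow> 'e \<Rightarrow> 'e set" where
  "error_component Sig D \<eta> c = {x. (c, x) \<in> (error_adjacency Sig D \<eta>)\<^sup>*}"

lemma connected_error_iff_adjacency:
  "connected_error Sig D \<eta> \<longleftrightarrow> (\<forall>x\<in>\<eta>. \<forall>y\<in>\<eta>. (x, y) \<in> (error_adjacency Sig D \<eta>)\<^sup>*)"
  by (simp add: connected_error_def error_adjacency_def)

lemma error_component_self: "c \<in> error_component Sig D \<eta> c"
  by (simp add: error_component_def)

lemma error_component_subset:
  assumes "c \<in> \<eta>"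
  shows "error_component Sig D \<eta> c \<subseteq> \<eta>"
proof
  fix x assume "x \<in> error_component Sig D \<eta> c"
  then have "(c, x) \<in> (error_adjacency Sig D \<eta>)\<^sup>*"
    by (simp add: error_component_def)
  then show "x \<in> \<eta>"
    by (cases rule: rtranclE) (use assms in \<open>simp_all add: error_adjacency_def\<close>)
qed

lemma error_component_step:
  assumes "x \<in> error_component Sig D \<eta> c" "(x, y) \<in> error_adjacency Sig D \<eta>"
  shows "y \<in> error_component Sig D \<eta> c"
  using assms(1) unfolding error_component_def mem_Collect_eq
  by (rule rtrancl_into_rtrancl) (fact assms(2))

lemma connected_error_component:
  assumes "c \<in> \<eta>"
  shows "connected_error Sig D (error_component Sig D \<eta> c)"
proof -
  let ?Q = "error_component Sig D \<eta> c"
  have from_c: "(c, x) \<in> (error_adjacency Sig D ?Q)\<^sup>*" if "x \<in> ?Q" for x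
  proof -
    from that have "(c, x) \<in> (error_adjacency Sig D \<eta>)\<^sup>*"
      by (simp add: error_component_def)
    then show ?thesis
    proof (induction rule: rtrancl_induct)
      case base
      show ?case by (rule rtrancl_refl)
    next
      case (step y z)
      have "y \<in> ?Q" using step.hyps(1) by (simp add: error_component_def)
      moreover from this step.hyps(2) have "z \<in> ?Q" by (rule error_component_step)
      ultimately have "(y, z) \<in> error_adjacency Sig D ?Q"
        using step.hyps(2) by (simp add: error_adjacency_def)
      with step.IH show ?case by (rule rtrancl_into_rtrancl)
    qed
  qed
  have "sym (error_adjacency Sig D ?Q)"
    unfolding sym_def error_adjacency_def directly_connected_def by blast
  then have "sym ((error_adjacency Sig D ?Q)\<^sup>*)" by (rule sym_rtrancl)
  then show ?thesis
    unfolding connected_error_iff_adjacency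
    by (meson from_c rtrancl_trans symD)
qed

text \<open>Hence on a check flipped by some generator of a component, the component has the same
  parity as all of \<open>\<eta>\<close>.\<close>
lemma error_component_flips:
  assumes "c \<in> \<eta>" "t \<in> error_component Sig D \<eta> c" "\<sigma> \<in> Sig" "D t \<sigma>"
  shows "{e \<in> \<eta>. D e \<sigma>} \<subseteq> error_component Sig D \<eta> c"
proof
  fix e assume e: "e \<in> {e \<in> \<eta>. D e \<sigma>}"
  have "t \<in> \<eta>" using error_component_subset[OF assms(1)] assms(2) by (rule subsetD)
  with e have "(t, e) \<in> error_adjacency Sig D \<eta>"
    unfolding error_adjacency_def directly_connected_def using assms(3,4) by blast
  with assms(2) show "e \<in> error_component Sig D \<eta> c"
    by (rule error_component_step)
qed

lemma syn_Union_error_components: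
  assumes "S \<subseteq> \<eta>"
  shows "syn Sig D (\<Union>c\<in>S. error_component Sig D \<eta> c) \<subseteq> (\<Union>c\<in>S. syn Sig D (error_component Sig D \<eta> c))"
proof
  let ?U = "\<Union>c\<in>S. error_component Sig D \<eta> c"
  fix \<sigma> assume \<sigma>: "\<sigma> \<in> syn Sig D ?U"
  from mem_syn_flipped[OF \<sigma>] obtain t c
    where "\<sigma> \<in> Sig" "c \<in> S" "t \<in> error_component Sig D \<eta> c" "D t \<sigma>"
    by blast
  moreover from \<open>c \<in> S\<close> assms have "c \<in> \<eta>" by (rule rev_subsetD)
  ultimately have "{e \<in> \<eta>. D e \<sigma>} \<subseteq> error_component Sig D \<eta> c"
    using error_component_flips by metis
  moreover have "?U \<subseteq> \<eta>" "error_component Sig D \<eta> c \<subseteq> ?U"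
    using assms error_component_subset \<open>c \<in> S\<close> by (meson UN_least subset_iff, blast)
  ultimately have flips: "{e \<in> ?U. D e \<sigma>} = {e \<in> error_component Sig D \<eta> c. D e \<sigma>}"
    by blast
  from \<sigma> have "\<sigma> \<in> syn Sig D (error_component Sig D \<eta> c)"
    unfolding syn_def mem_Collect_eq flips .
  with \<open>c \<in> S\<close> show "\<sigma> \<in> (\<Union>c\<in>S. syn Sig D (error_component Sig D \<eta> c))"
    by blast
qed

lemma syn_error_component_subset:
  assumes "c \<in> \<eta>"
  shows "syn Sig D (error_component Sig D \<eta> c) \<subseteq> syn Sig D \<eta>"
proof
  fix \<sigma> assume \<sigma>: "\<sigma> \<in> syn Sig D (error_component Sig D \<eta> c)"
  from mem_syn_flipped[OF \<sigma>] obtain t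
    where "\<sigma> \<in> Sig" "t \<in> error_component Sig D \<eta> c" "D t \<sigma>"
    by blast
  with assms have "{e \<in> \<eta>. D e \<sigma>} \<subseteq> error_component Sig D \<eta> c"
    using error_component_flips by metis
  with error_component_subset[OF assms]
  have flips: "{e \<in> error_component Sig D \<eta> c. D e \<sigma>} = {e \<in> \<eta>. D e \<sigma>}"
    by blast
  from \<sigma> show "\<sigma> \<in> syn Sig D \<eta>"
    unfolding syn_def mem_Collect_eq flips .
qed

subsection \<open>Modular decoding\<close>

text \<open>The threshold \<open>d\<close> need not be the fault distance for the decoding run to be correct; it
  is only compared with the fault distance for the logical conclusion.\<close>
locale modular_decoding =
  fixes E :: "'e set" and Sig :: "'s set" and D :: "'e \<Rightarrow> 's \<Rightarrow> bool"
    and C B :: "nat \<Rightarrow> 'e set" and dec :: "nat \<Rightarrow> 's set \<Rightarrow> 'e set option"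
    and n :: nat and d :: enat
  assumes finite_E: "finite E"
    and C_cover: "(\<Union>i\<in>{1..n}. C i) = E"
    and B_subset: "\<And>i. i \<in> {1..n} \<Longrightarrow> B i \<subseteq> E - (past C i \<union> C i)"
    and dec_sound: "\<And>i \<eta>. i \<in> {1..n} \<Longrightarrow> \<eta> \<subseteq> C i \<union> B i \<Longrightarrow> enat (2 * card \<eta>) < d \<Longrightarrow>
         \<exists>\<mu>. dec i (synV E Sig D C B i \<eta>) = Some \<mu> \<and> \<mu> \<subseteq> C i \<union> B i
           \<and> synV E Sig D C B i \<mu> = synV E Sig D C B i \<eta>
           \<and> (\<forall>\<mu>'. \<mu>' \<subseteq> C i \<union> B i \<and> synV E Sig D C B i \<mu>' = synV E Sig D C B i \<eta>
                  \<longrightarrow> card \<mu> \<le> card \<mu>')"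
    and buffering: "\<And>i \<eta>. i \<in> {1..n} \<Longrightarrow> connected_error Sig D \<eta> \<Longrightarrow> \<eta> \<subseteq> C i \<union> B i \<Longrightarrow>
         synV E Sig D C B i \<eta> = {} \<Longrightarrow> \<eta> \<inter> C i \<noteq> {} \<Longrightarrow> syn Sig D \<eta> \<noteq> {} \<Longrightarrow>
         d \<le> enat (card \<eta>)"
begin

lemma finite_if_subset_E: "X \<subseteq> E \<Longrightarrow> finite X"
  by (rule finite_subset[OF _ finite_E])

lemma C_B_subset_E: "i \<in> {1..n} \<Longrightarrow> C i \<union> B i \<subseteq> E"
  using C_cover B_subset by blast

lemma past_subset_E: "i \<le> Suc n \<Longrightarrow> past C i \<subseteq> E"
  unfolding past_def C_cover[symmetric] by (rule UN_mono) auto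

lemma past_Suc_n: "past C (Suc n) = E"
  using C_cover by (simp add: past_def atLeastLessThanSuc_atLeastAtMost)

lemma buffer_cleanup:
  assumes i: "i \<in> {1..n}" and \<delta>_sub: "\<delta> \<subseteq> C i \<union> B i"
    and \<delta>_silent: "synV E Sig D C B i \<delta> = {}" and \<delta>_light: "enat (card \<delta>) < d"
  obtains \<delta>' where "\<delta>' \<subseteq> \<delta>" "\<delta>' \<inter> C i = \<delta> \<inter> C i" "syn Sig D \<delta>' = {}"
proof -
  let ?\<delta>' = "\<Union>c\<in>\<delta> \<inter> C i. error_component Sig D \<delta> c"
  have fin: "finite \<delta>"
    using finite_if_subset_E[OF order_trans[OF \<delta>_sub C_B_subset_E[OF i]]] .
  have clean: "syn Sig D (error_component Sig D \<delta> c) = {}" if c: "c \<in> \<delta> \<inter> C i" for c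
  proof (rule ccontr)
    let ?Q = "error_component Sig D \<delta> c"
    assume detectable: "syn Sig D ?Q \<noteq> {}"
    from c have "c \<in> \<delta>" by blast
    have Q_sub: "?Q \<subseteq> \<delta>" by (rule error_component_subset[OF \<open>c \<in> \<delta>\<close>])
    have "synV E Sig D C B i ?Q = {}"
      using syn_error_component_subset[of c \<delta> Sig D] \<open>c \<in> \<delta>\<close> \<delta>_silent unfolding synV_def by blast
    moreover have "?Q \<inter> C i \<noteq> {}"
      using error_component_self[of c Sig D \<delta>] c by blast
    ultimately have "d \<le> enat (card ?Q)"
      using buffering[OF i connected_error_component[OF \<open>c \<in> \<delta>\<close>]] Q_sub \<delta>_sub detectable
      by (meson order_trans)
    also have "\<dots> \<le> enat (card \<delta>)"
      using card_mono[OF fin Q_sub] by simp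
    finally show False using \<delta>_light by simp
  qed
  have sub: "?\<delta>' \<subseteq> \<delta>"
    by (rule UN_least) (simp add: error_component_subset)
  moreover have "?\<delta>' \<inter> C i = \<delta> \<inter> C i"
    using sub error_component_self by fastforce
  moreover have "syn Sig D ?\<delta>' = {}"
    using syn_Union_error_components[of "\<delta> \<inter> C i" \<delta> Sig D] clean by auto
  ultimately show thesis by (rule that)
qed

text \<open>The residual \<open>X\<close> is \<open>\<eta> + \<mu> \<inter> C\<^sub>i\<close> plus the undetectable components of \<open>\<eta> + \<mu>\<close> that meet
  \<open>C\<^sub>i\<close>; these components cancel its part in \<open>C\<^sub>i\<close>.\<close>
lemma task_residual:
  assumes i: "i \<in> {1..n}" and \<eta>_sub: "\<eta> \<subseteq> C i \<union> B i" and \<eta>_light: "enat (2 * card \<eta>) < d"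
  obtains \<mu> X where "dec i (synV E Sig D C B i \<eta>) = Some \<mu>" "X \<subseteq> B i"
    "syn Sig D X = syn Sig D \<eta> \<oplus> syn Sig D (\<mu> \<inter> C i)" "card (\<mu> \<inter> C i) + card X \<le> card \<eta>"
proof -
  let ?V = "synV E Sig D C B i"
  from dec_sound[OF i \<eta>_sub \<eta>_light] obtain \<mu> where dec: "dec i (?V \<eta>) = Some \<mu>"
    and \<mu>_sub: "\<mu> \<subseteq> C i \<union> B i" and \<mu>_syn: "?V \<mu> = ?V \<eta>"
    and \<mu>_minimal: "\<forall>\<mu>'. \<mu>' \<subseteq> C i \<union> B i \<and> ?V \<mu>' = ?V \<eta> \<longrightarrow> card \<mu> \<le> card \<mu>'"
    by (elim exE conjE)
  have \<mu>_min: "card \<mu> \<le> card \<mu>'" if "\<mu>' \<subseteq> C i \<union> B i" "?V \<mu>' = ?V \<eta>" for \<mu>'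
    using \<mu>_minimal that by blast
  have fin: "finite \<eta>" "finite \<mu>"
    using \<eta>_sub \<mu>_sub C_B_subset_E[OF i] by (meson finite_if_subset_E order_trans)+
  define \<delta> where "\<delta> = \<eta> \<oplus> \<mu>"
  have \<delta>_sub: "\<delta> \<subseteq> C i \<union> B i"
    unfolding \<delta>_def using \<eta>_sub \<mu>_sub by (rule sdiff_subset)
  have "?V \<delta> = {}"
    unfolding \<delta>_def synV_sdiff[OF fin] \<mu>_syn by (simp add: sdiff_eq_empty_iff)
  moreover have "enat (card \<delta>) < d"
  proof -
    have "card \<delta> \<le> card \<eta> + card \<mu>"
      unfolding \<delta>_def by (rule card_sdiff_le[OF fin])
    moreover have "card \<mu> \<le> card \<eta>" by (rule \<mu>_min[OF \<eta>_sub refl])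
    ultimately have "enat (card \<delta>) \<le> enat (2 * card \<eta>)" by simp
    then show ?thesis using \<eta>_light by (rule order.strict_trans1)
  qed
  ultimately obtain \<delta>' where \<delta>'_sub: "\<delta>' \<subseteq> \<delta>" and \<delta>'_C: "\<delta>' \<inter> C i = \<delta> \<inter> C i"
    and \<delta>'_syn: "syn Sig D \<delta>' = {}"
    using buffer_cleanup[OF i \<delta>_sub] by blast
  have fin_\<delta>': "finite \<delta>'"
    using \<delta>'_sub finite_sdiff[OF fin] unfolding \<delta>_def by (rule finite_subset)
  have "card \<mu> \<le> card (\<mu> \<oplus> \<delta>')"
  proof (rule \<mu>_min)
    show "\<mu> \<oplus> \<delta>' \<subseteq> C i \<union> B i"
      using \<mu>_sub order_trans[OF \<delta>'_sub \<delta>_sub] by (rule sdiff_subset)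
    show "?V (\<mu> \<oplus> \<delta>') = ?V \<eta>"
      using \<mu>_syn unfolding synV_sdiff[OF fin(2) fin_\<delta>'] by (simp add: synV_def \<delta>'_syn)
  qed
  moreover have "card (\<eta> \<oplus> \<delta>') + card (\<mu> \<oplus> \<delta>') = card \<eta> + card \<mu>"
    using card_sdiff_swap[OF fin] \<delta>'_sub unfolding \<delta>_def .
  ultimately have swap: "card (\<eta> \<oplus> \<delta>') \<le> card \<eta>" by linarith
  define \<kappa> where "\<kappa> = \<mu> \<inter> C i"
  define X where "X = \<eta> \<oplus> \<delta>' \<oplus> \<kappa>"
  have committed: "(\<eta> \<oplus> \<delta>') \<inter> C i = \<kappa>"
    using \<delta>'_C unfolding \<kappa>_def \<delta>_def by (auto simp: sdiff_def)
  then have split: "\<eta> \<oplus> \<delta>' = X \<union> \<kappa>" "X \<inter> \<kappa> = {}" "X \<inter> C i = {}"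
    unfolding X_def by (auto simp: sdiff_def)
  have "X \<subseteq> C i \<union> B i"
    unfolding X_def using \<eta>_sub order_trans[OF \<delta>'_sub \<delta>_sub] \<mu>_sub
    by (auto simp: sdiff_def \<kappa>_def)
  with split(3) have X_B: "X \<subseteq> B i" by blast
  have fin_\<kappa>: "finite \<kappa>" using fin(2) by (simp add: \<kappa>_def)
  have "syn Sig D X = syn Sig D \<eta> \<oplus> syn Sig D \<delta>' \<oplus> syn Sig D \<kappa>"
    unfolding X_def by (simp add: syn_sdiff fin fin_\<delta>' fin_\<kappa> finite_sdiff)
  then have X_syn: "syn Sig D X = syn Sig D \<eta> \<oplus> syn Sig D \<kappa>"
    by (simp add: \<delta>'_syn)
  have "card (\<eta> \<oplus> \<delta>') = card X + card \<kappa>"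
    using split(1,2) card_Un_disjoint fin_\<kappa> finite_sdiff[OF fin(1) fin_\<delta>']
    by (metis finite_Un)
  with swap have "card \<kappa> + card X \<le> card \<eta>" by linarith
  with dec X_B X_syn show thesis unfolding \<kappa>_def by (rule that)
qed

lemma run_invariant:
  assumes \<epsilon>_sub: "\<epsilon> \<subseteq> E" and \<epsilon>_light: "enat (2 * card \<epsilon>) < d"
  shows "k \<le> n \<Longrightarrow> \<exists>K \<epsilon>'. run E Sig D C B dec \<epsilon> k = Some K \<and> K \<subseteq> past C (Suc k)
           \<and> \<epsilon>' \<subseteq> E - past C (Suc k) \<and> syn Sig D (K \<oplus> \<epsilon>) = syn Sig D \<epsilon>'
           \<and> card K + card \<epsilon>' \<le> card \<epsilon>"
proof (induction k)
  case 0
  have "past C (Suc 0) = {}" by (simp add: past_def)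
  with \<epsilon>_sub show ?case by (intro exI[of _ "{}"] exI[of _ \<epsilon>]) simp
next
  case (Suc k)
  let ?i = "Suc k"
  from Suc.IH[OF Suc_leD[OF Suc.prems]] obtain K \<epsilon>'
    where run: "run E Sig D C B dec \<epsilon> k = Some K"
      and K_sub: "K \<subseteq> past C ?i" and \<epsilon>'_sub: "\<epsilon>' \<subseteq> E - past C ?i"
      and syn_eq: "syn Sig D (K \<oplus> \<epsilon>) = syn Sig D \<epsilon>'" and card_le: "card K + card \<epsilon>' \<le> card \<epsilon>"
    by blast
  have i: "?i \<in> {1..n}" using Suc.prems by simp
  have past_i: "past C (Suc ?i) = past C ?i \<union> C ?i" by (rule past_Suc) simp
  define \<eta> where "\<eta> = \<epsilon>' \<inter> (C ?i \<union> B ?i)"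
  define \<phi> where "\<phi> = \<epsilon>' - (C ?i \<union> B ?i)"
  have fin_K: "finite K" using K_sub past_subset_E[of ?i] Suc.prems
    by (meson finite_if_subset_E le_SucI order_trans)
  have fin_\<epsilon>: "finite \<epsilon>" "finite \<epsilon>'" using \<epsilon>_sub \<epsilon>'_sub by (auto intro: finite_if_subset_E)
  then have fin_\<eta>\<phi>: "finite \<eta>" "finite \<phi>" by (simp_all add: \<eta>_def \<phi>_def)
  have \<epsilon>'_split: "\<epsilon>' = \<eta> \<oplus> \<phi>" "\<epsilon>' = \<eta> \<union> \<phi>" "\<eta> \<inter> \<phi> = {}"
    by (auto simp: \<eta>_def \<phi>_def sdiff_def)
  have \<eta>_sub: "\<eta> \<subseteq> C ?i \<union> B ?i" by (simp add: \<eta>_def)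
  have "card \<eta> \<le> card \<epsilon>'" using fin_\<epsilon>(2) by (simp add: \<eta>_def card_mono)
  with card_le \<epsilon>_light have \<eta>_light: "enat (2 * card \<eta>) < d"
    by (meson enat_ord_simps(1) le_add2 mult_le_mono2 order.trans order.strict_trans1)
  have input: "synV E Sig D C B ?i (K \<oplus> \<epsilon>) = synV E Sig D C B ?i \<eta>"
  proof -
    have "\<phi> \<subseteq> future E C B ?i" using \<epsilon>'_sub by (auto simp: \<phi>_def future_def)
    then have "synV E Sig D C B ?i \<phi> = {}" by (rule synV_future)
    with syn_eq show ?thesis
      unfolding synV_def \<epsilon>'_split(1) syn_sdiff[OF fin_\<eta>\<phi>] by (simp add: sdiff_Int_distrib)
  qed
  obtain \<mu> X where dec: "dec ?i (synV E Sig D C B ?i \<eta>) = Some \<mu>" and X_B: "X \<subseteq> B ?i"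
    and X_syn: "syn Sig D X = syn Sig D \<eta> \<oplus> syn Sig D (\<mu> \<inter> C ?i)"
    and X_card: "card (\<mu> \<inter> C ?i) + card X \<le> card \<eta>"
    by (rule task_residual[OF i \<eta>_sub \<eta>_light])
  let ?\<kappa> = "\<mu> \<inter> C ?i"
  have fin_X\<kappa>: "finite X" "finite ?\<kappa>"
    using X_B C_B_subset_E[OF i] by (auto intro: finite_if_subset_E)
  have B_i: "B ?i \<subseteq> E - (past C ?i \<union> C ?i)" by (rule B_subset[OF i])
  have "\<phi> \<inter> X = {}" using X_B by (auto simp: \<phi>_def)
  then have \<phi>X: "\<phi> \<union> X = \<phi> \<oplus> X" "\<phi> \<inter> X = {}"
    by (simp_all add: sdiff_disjoint_eq_Un)
  show ?case
  proof (intro exI conjI)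
    show "run E Sig D C B dec \<epsilon> (Suc k) = Some (K \<oplus> ?\<kappa>)"
      using run dec input by simp
    show "K \<oplus> ?\<kappa> \<subseteq> past C (Suc ?i)"
      unfolding past_i using K_sub by (auto simp: sdiff_def)
    show "\<phi> \<union> X \<subseteq> E - past C (Suc ?i)"
      unfolding past_i using \<epsilon>'_sub X_B B_i by (auto simp: \<phi>_def)
    have "syn Sig D (K \<oplus> ?\<kappa> \<oplus> \<epsilon>) = syn Sig D ((K \<oplus> \<epsilon>) \<oplus> ?\<kappa>)"
      by (simp only: sdiff_ac)
    also have "\<dots> = syn Sig D \<eta> \<oplus> syn Sig D \<phi> \<oplus> syn Sig D ?\<kappa>"
      using fin_K fin_\<epsilon> fin_X\<kappa>
      by (simp add: syn_sdiff finite_sdiff syn_eq \<epsilon>'_split(1) syn_sdiff[OF fin_\<eta>\<phi>])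
    also have "\<dots> = syn Sig D (\<phi> \<union> X)"
      unfolding \<phi>X(1) syn_sdiff[OF fin_\<eta>\<phi>(2) fin_X\<kappa>(1)] X_syn by (simp only: sdiff_ac)
    finally show "syn Sig D (K \<oplus> ?\<kappa> \<oplus> \<epsilon>) = syn Sig D (\<phi> \<union> X)" .
    have "card (K \<oplus> ?\<kappa>) \<le> card K + card ?\<kappa>" by (rule card_sdiff_le[OF fin_K fin_X\<kappa>(2)])
    moreover have "card (\<phi> \<union> X) = card \<phi> + card X"
      using card_Un_disjoint[OF fin_\<eta>\<phi>(2) fin_X\<kappa>(1) \<phi>X(2)] .
    moreover have "card \<epsilon>' = card \<eta> + card \<phi>"
      using card_Un_disjoint[OF fin_\<eta>\<phi> \<epsilon>'_split(3)] \<epsilon>'_split(2) by simp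
    ultimately show "card (K \<oplus> ?\<kappa>) + card (\<phi> \<union> X) \<le> card \<epsilon>"
      using X_card card_le by linarith
  qed
qed

lemma run_corrects:
  assumes "\<epsilon> \<subseteq> E" "enat (2 * card \<epsilon>) < d"
  obtains \<kappa> where "run E Sig D C B dec \<epsilon> n = Some \<kappa>" "\<kappa> \<subseteq> E"
    "syn Sig D \<kappa> = syn Sig D \<epsilon>" "card \<kappa> \<le> card \<epsilon>"
proof -
  from run_invariant[OF assms order_refl] obtain \<kappa> \<epsilon>'
    where run: "run E Sig D C B dec \<epsilon> n = Some \<kappa>" and \<kappa>_sub: "\<kappa> \<subseteq> past C (Suc n)"
      and \<epsilon>'_sub: "\<epsilon>' \<subseteq> E - past C (Suc n)" and syn_eq: "syn Sig D (\<kappa> \<oplus> \<epsilon>) = syn Sig D \<epsilon>'"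
      and card_le: "card \<kappa> + card \<epsilon>' \<le> card \<epsilon>"
    by blast
  have "\<epsilon>' = {}" using \<epsilon>'_sub past_Suc_n by blast
  have \<kappa>_E: "\<kappa> \<subseteq> E" using \<kappa>_sub past_Suc_n by simp
  have "finite \<kappa>" "finite \<epsilon>" using \<kappa>_E assms(1) by (auto intro: finite_if_subset_E)
  with syn_eq \<open>\<epsilon>' = {}\<close> have "syn Sig D \<kappa> = syn Sig D \<epsilon>"
    by (simp add: syn_sdiff sdiff_eq_empty_iff)
  from that[OF run \<kappa>_E this] card_le show thesis by simp
qed

text \<open>The run depends on \<open>\<epsilon>\<close> only through its syndrome, so a lighter error with the same syndrome
  would be corrected by the same \<open>\<kappa>\<close>.\<close>
lemma run_minimum_weight:
  assumes \<epsilon>: "\<epsilon> \<subseteq> E" "enat (2 * card \<epsilon>) < d" and run: "run E Sig D C B dec \<epsilon> n = Some \<kappa>"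
    and \<kappa>': "\<kappa>' \<subseteq> E" "syn Sig D \<kappa>' = syn Sig D \<epsilon>"
  shows "card \<kappa> \<le> card \<kappa>'"
proof (cases "card \<epsilon> \<le> card \<kappa>'")
  case True
  obtain \<kappa>\<^sub>0 where "run E Sig D C B dec \<epsilon> n = Some \<kappa>\<^sub>0" "card \<kappa>\<^sub>0 \<le> card \<epsilon>"
    by (rule run_corrects[OF \<epsilon>])
  with run True show ?thesis by simp
next
  case False
  with \<epsilon>(2) have \<kappa>'_light: "enat (2 * card \<kappa>') < d"
    by (meson enat_ord_simps(1) mult_le_mono2 nat_le_linear order.strict_trans1)
  have "finite \<kappa>'" "finite \<epsilon>" using \<kappa>'(1) \<epsilon>(1) by (auto intro: finite_if_subset_E)
  then have "run E Sig D C B dec \<kappa>' n = Some \<kappa>"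
    using run_syn_cong[of \<kappa>' \<epsilon> Sig D E C B dec n] \<kappa>'(2) run by simp
  moreover obtain \<kappa>\<^sub>0 where "run E Sig D C B dec \<kappa>' n = Some \<kappa>\<^sub>0" "card \<kappa>\<^sub>0 \<le> card \<kappa>'"
    by (rule run_corrects[OF \<kappa>'(1) \<kappa>'_light])
  ultimately show ?thesis by simp
qed

end

theorem mainTheorem1:
  fixes E :: "'e set" and Sig :: "'s set" and M :: "'m set"
    and D :: "'e \<Rightarrow> 's \<Rightarrow> bool" and L :: "'e \<Rightarrow> 'm \<Rightarrow> bool"
    and n :: nat and C B :: "nat \<Rightarrow> 'e set"
    and dec :: "nat \<Rightarrow> 's set \<Rightarrow> 'e set option"
    and d :: enat
  assumes finE: "finite E" and finSig: "finite Sig" and finM: "finite M"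
    and d_def: "d = fault_distance E Sig D M L"
    and C_cover: "(\<Union>i\<in>{1..n}. C i) = E"
    and C_nonempty: "\<forall>i\<in>{1..n}. C i \<noteq> {}"
    and C_disj: "\<forall>i\<in>{1..n}. \<forall>j\<in>{1..n}. i \<noteq> j \<longrightarrow> C i \<inter> C j = {}"
    and B_sub: "\<forall>i\<in>{1..n}. B i \<subseteq> E - (past C i \<union> C i)"
    and dec_valid: "\<forall>i\<in>{1..n}. \<forall>s.
         (\<forall>\<mu>. dec i s = Some \<mu> \<longrightarrow> \<mu> \<subseteq> C i \<union> B i \<and> synV E Sig D C B i \<mu> = s)
       \<and> (dec i s = None \<longrightarrow> \<not> (\<exists>\<mu>. \<mu> \<subseteq> C i \<union> B i \<and> synV E Sig D C B i \<mu> = s))"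
    and dec_sound: "\<forall>i\<in>{1..n}. \<forall>s.
         (\<exists>\<eta>. \<eta> \<subseteq> C i \<union> B i \<and> synV E Sig D C B i \<eta> = s \<and> enat (2 * card \<eta>) < d) \<longrightarrow>
         (\<exists>\<mu>. dec i s = Some \<mu> \<and> \<mu> \<subseteq> C i \<union> B i \<and> synV E Sig D C B i \<mu> = s
              \<and> (\<forall>\<mu>'. \<mu>' \<subseteq> C i \<union> B i \<and> synV E Sig D C B i \<mu>' = s \<longrightarrow> card \<mu> \<le> card \<mu>'))"
    and buffering: "\<forall>i\<in>{1..n}. \<forall>\<eta>.
         connected_error Sig D \<eta> \<and> \<eta> \<subseteq> C i \<union> B i \<and> synV E Sig D C B i \<eta> = {}
         \<and> \<eta> \<inter> C i \<noteq> {} \<and> syn Sig D \<eta> \<noteq> {} \<longrightarrow> d \<le> enat (card \<eta>)"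
  shows "\<forall>\<epsilon>. \<epsilon> \<subseteq> E \<and> enat (2 * card \<epsilon>) < d \<longrightarrow>
           (\<exists>\<kappa>. run E Sig D C B dec \<epsilon> n = Some \<kappa>
              \<and> syn Sig D \<kappa> = syn Sig D \<epsilon>
              \<and> card \<kappa> \<le> card \<epsilon>
              \<and> (\<forall>\<kappa>'. \<kappa>' \<subseteq> E \<and> syn Sig D \<kappa>' = syn Sig D \<epsilon> \<longrightarrow> card \<kappa> \<le> card \<kappa>')
              \<and> logical M L \<kappa> = logical M L \<epsilon>)"
proof -
  interpret modular_decoding E Sig D C B dec n d
  proof
    show "finite E" "(\<Union>i\<in>{1..n}. C i) = E" by (fact finE C_cover)+
  next
    show "B i \<subseteq> E - (past C i \<union> C i)" if "i \<in> {1..n}" for i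
      using B_sub that by (rule bspec)
  next
    fix i \<eta> assume i: "i \<in> {1..n}" and "\<eta> \<subseteq> C i \<union> B i" "enat (2 * card \<eta>) < d"
    show "\<exists>\<mu>. dec i (synV E Sig D C B i \<eta>) = Some \<mu> \<and> \<mu> \<subseteq> C i \<union> B i
        \<and> synV E Sig D C B i \<mu> = synV E Sig D C B i \<eta>
        \<and> (\<forall>\<mu>'. \<mu>' \<subseteq> C i \<union> B i \<and> synV E Sig D C B i \<mu>' = synV E Sig D C B i \<eta>
               \<longrightarrow> card \<mu> \<le> card \<mu>')"
      by (rule dec_sound[rule_format, OF i]) (use \<open>\<eta> \<subseteq> C i \<union> B i\<close> \<open>enat (2 * card \<eta>) < d\<close> in blast)
  next
    fix i \<eta> assume i: "i \<in> {1..n}" and "connected_error Sig D \<eta>" "\<eta> \<subseteq> C i \<union> B i"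
      "synV E Sig D C B i \<eta> = {}" "\<eta> \<inter> C i \<noteq> {}" "syn Sig D \<eta> \<noteq> {}"
    then show "d \<le> enat (card \<eta>)"
      by (intro buffering[rule_format, OF i]) simp
  qed
  show ?thesis
  proof (intro allI impI, elim conjE)
    fix \<epsilon> assume \<epsilon>: "\<epsilon> \<subseteq> E" "enat (2 * card \<epsilon>) < d"
    obtain \<kappa> where run: "run E Sig D C B dec \<epsilon> n = Some \<kappa>" and \<kappa>_E: "\<kappa> \<subseteq> E"
      and syn: "syn Sig D \<kappa> = syn Sig D \<epsilon>" and card: "card \<kappa> \<le> card \<epsilon>"
      by (rule run_corrects[OF \<epsilon>])
    from card have "enat (card \<kappa> + card \<epsilon>) \<le> enat (2 * card \<epsilon>)" by simp
    also note \<epsilon>(2)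
    finally have "enat (card \<kappa> + card \<epsilon>) < fault_distance E Sig D M L"
      unfolding d_def .
    with finE \<kappa>_E \<epsilon>(1) syn have "logical M L \<kappa> = logical M L \<epsilon>"
      by (rule logical_eq_below_fault_distance)
    with run syn card run_minimum_weight[OF \<epsilon> run]
    show "\<exists>\<kappa>. run E Sig D C B dec \<epsilon> n = Some \<kappa> \<and> syn Sig D \<kappa> = syn Sig D \<epsilon> \<and> card \<kappa> \<le> card \<epsilon>
        \<and> (\<forall>\<kappa>'. \<kappa>' \<subseteq> E \<and> syn Sig D \<kappa>' = syn Sig D \<epsilon> \<longrightarrow> card \<kappa> \<le> card \<kappa>')
        \<and> logical M L \<kappa> = logical M L \<epsilon>"
      by blast
  qed
qed

end
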